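(* The relation $t\subseteq\mathbb{N}\times\mathbb{T}$ defined below is the graph of a function $t:\mathbb{N}\to\mathbb{T}$, and this function satisfies $t(n(X))=X$ for all $X\in\mathbb{T}$ and $n(t(x))=x$ for all $x\in\mathbb{N}$.
   Context: Let $\mathbb{T}$ be the set of finite terms defined inductively by: the constant $e\in\mathbb{T}$; and if $X\in\mathbb{T}$ and $Xs$ is a finite (possibly empty) list of elements of $\mathbb{T}$, then $v(X,Xs)\in\mathbb{T}$ and $w(X,Xs)\in\mathbb{T}$. Write $[\,]$ for the empty list and $[Y|Xs]$ for the list with first element $Y$ followed by the list $Xs$ (so $[e,Y|Ys]$ is the list starting with $e$, then $Y$, then $Ys$). Define $n:\mathbb{T}\to\mathbb{N}$ by $n(e)=0$, $n(v(X,[\,]))=2^{n(X)+1}-1$, $n(v(X,[Y|Xs]))=(n(w(Y,Xs))+1)2^{n(X)+1}-1$, $n(w(X,[\,]))=2^{n(X)+2}-2$, $n(w(X,[Y|Xs]))=(n(v(Y,Xs))+2)2^{n(X)+1}-2$. Let $\sigma\subseteq\mathbb{T}\times\mathbb{T}$ be the smallest relation such that (for all terms and lists of the appropriate kinds): (1) $\sigma(e,v(e,[\,]))$; (2) $\sigma(v(e,[\,]),w(e,[\,]))$; (3) if $\sigma(X,X')$ then $\sigma(v(e,[X|Xs]),w(X',Xs))$; (4) if $\sigma(P,T)$ then $\sigma(v(T,Xs),w(e,[P|Xs]))$; (5) if $\sigma(T,T')$ then $\sigma(w(T,[\,]),v(T',[\,]))$; (6) $\sigma(w(Z,[e]),v(Z,[e]))$;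 (7) if $\sigma(Y,Y')$ then $\sigma(w(Z,[e,Y|Ys]),v(Z,[Y'|Ys]))$; (8) if $\sigma(X',X)$ then $\sigma(w(Z,[X|Xs]),v(Z,[e,X'|Xs]))$. Let $O\subseteq\mathbb{T}\times\mathbb{T}$ consist of the pairs $(e,v(e,[\,]))$, $(w(X,Xs),v(e,[X|Xs]))$, and $(v(X,Xs),v(X',Xs))$ whenever $\sigma(X,X')$. Let $I\subseteq\mathbb{T}\times\mathbb{T}$ consist of the pairs $(e,w(e,[\,]))$, $(v(X,Xs),w(e,[X|Xs]))$, and $(w(X,Xs),w(X',Xs))$ whenever $\sigma(X,X')$. Let $t\subseteq\mathbb{N}\times\mathbb{T}$ be the smallest relation such that: $(0,e)\in t$; if $x>0$ is odd, $((x-1)/2,A)\in t$ and $(A,R)\in O$, then $(x,R)\in t$; if $x>0$ is even, $(x/2-1,A)\in t$ and $(A,R)\in I$, then $(x,R)\in t$. *)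

theory Defs
  imports Main
begin

datatype T = e | v T "T list" | w T "T list"

fun n :: "T \<Rightarrow> nat" where
  "n e = 0"
| "n (v X []) = 2 ^ (n X + 1) - 1"
| "n (v X (Y # Xs)) = (n (w Y Xs) + 1) * 2 ^ (n X + 1) - 1"
| "n (w X []) = 2 ^ (n X + 2) - 2"
| "n (w X (Y # Xs)) = (n (v Y Xs) + 2) * 2 ^ (n X + 1) - 2"

inductive \<sigma> :: "T \<Rightarrow> T \<Rightarrow> bool" where
  s1: "\<sigma> e (v e [])"
| s2: "\<sigma> (v e []) (w e [])"
| s3: "\<sigma> X X' \<Longrightarrow> \<sigma> (v e (X # Xs)) (w X' Xs)"
| s4: "\<sigma> P T \<Longrightarrow> \<sigma> (v T Xs) (w e (P # Xs))"
| s5: "\<sigma> T T' \<Longrightarrow> \<sigma> (w T []) (v T' [])"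
| s6: "\<sigma> (w Z [e]) (v Z [e])"
| s7: "\<sigma> Y Y' \<Longrightarrow> \<sigma> (w Z (e # Y # Ys)) (v Z (Y' # Ys))"
| s8: "\<sigma> X' X \<Longrightarrow> \<sigma> (w Z (X # Xs)) (v Z (e # X' # Xs))"

inductive O_rel :: "T \<Rightarrow> T \<Rightarrow> bool" where
  "O_rel e (v e [])"
| "O_rel (w X Xs) (v e (X # Xs))"
| "\<sigma> X X' \<Longrightarrow> O_rel (v X Xs) (v X' Xs)"

inductive I_rel :: "T \<Rightarrow> T \<Rightarrow> bool" where
  "I_rel e (w e [])"
| "I_rel (v X Xs) (w e (X # Xs))"
| "\<sigma> X X' \<Longrightarrow> I_rel (w X Xs) (w X' Xs)"

inductive t :: "nat \<Rightarrow> T \<Rightarrow> bool" where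
  t0: "t 0 e"
| t_odd: "\<lbrakk>x > 0; odd x; t ((x - 1) div 2) A; O_rel A R\<rbrakk> \<Longrightarrow> t x R"
| t_even: "\<lbrakk>x > 0; even x; t (x div 2 - 1) A; I_rel A R\<rbrakk> \<Longrightarrow> t x R"

end

theory Submission
  imports Defs
begin

text \<open>
  Under the encoding n, the relation \<sigma> is the successor x \<mapsto> x + 1, and O_rel and I_rel are
  the maps x \<mapsto> 2x + 1 and x \<mapsto> 2x + 2 of bijective base 2; hence t x X forces n X = x.
  Rule inversion shows that \<sigma> is functional, so t is functional. Since every term has a
  \<sigma>-successor, t is total; since every term other than e has a \<sigma>-predecessor, every v-term
  is an O_rel-image and every w-term an I_rel-image, which gives t (n X) X by induction on n X.
\<close>

lemma n_v_Nil: "n (v X []) + 1 = 2 ^ (n X + 1)"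
  by simp

lemma n_v_Cons: "n (v X (Y # Xs)) + 1 = (n (w Y Xs) + 1) * 2 ^ (n X + 1)"
proof -
  have "1 \<le> (n (w Y Xs) + 1) * (2::nat) ^ (n X + 1)"
    by (simp add: Suc_le_eq)
  then show ?thesis unfolding n.simps by arith
qed

lemma n_w_Nil: "n (w X []) + 2 = 2 ^ (n X + 2)"
proof -
  have "(2::nat) \<le> 2 ^ (n X + 2)"
    using power_increasing[of 1 "n X + 2" "2::nat"] by simp
  then show ?thesis unfolding n.simps by arith
qed

lemma n_w_Cons: "n (w X (Y # Xs)) + 2 = (n (v Y Xs) + 2) * 2 ^ (n X + 1)"
proof -
  have "2 * 1 \<le> (n (v Y Xs) + 2) * (2::nat) ^ (n X + 1)"
    by (intro mult_mono) auto
  then show ?thesis unfolding n.simps by arith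
qed

lemma n_v_e_Nil [simp]: "n (v e []) = 1"
  by simp

lemma n_w_e_Nil [simp]: "n (w e []) = 2"
  by simp

text \<open>From here on the forms above, free of truncated subtraction, replace the equations of n.\<close>

declare n.simps(2-5)[simp del]

lemma n_v_head_Suc: "n X' = Suc (n X) \<Longrightarrow> n (v X' Xs) + 1 = 2 * (n (v X Xs) + 1)"
  by (cases Xs) (simp_all only: n_v_Nil n_v_Cons, simp_all)

lemma n_w_head_Suc: "n X' = Suc (n X) \<Longrightarrow> n (w X' Xs) + 2 = 2 * (n (w X Xs) + 2)"
  by (cases Xs) (simp_all only: n_w_Nil n_w_Cons, simp_all)

lemma n_sigma: "\<sigma> X X' \<Longrightarrow> n X' = Suc (n X)"
proof (induction rule: \<sigma>.induct)
  case (s3 X X' Xs)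
  then show ?case using n_w_head_Suc[of X' X Xs] n_v_Cons[of e X Xs] by simp
next
  case (s4 P T Xs)
  then show ?case using n_v_head_Suc[of T P Xs] n_w_Cons[of e P Xs] by simp
next
  case (s5 T T')
  then show ?case using n_w_Nil[of T] n_v_Nil[of T'] by simp
next
  case (s6 Z)
  then show ?case using n_w_Cons[of Z e "[]"] n_v_Cons[of Z e "[]"] by simp
next
  case (s7 Y Y' Z Ys)
  then show ?case
    using n_w_head_Suc[of Y' Y Ys] n_w_Cons[of Z e "Y # Ys"] n_v_Cons[of e Y Ys] n_v_Cons[of Z Y' Ys]
    by (simp add: algebra_simps)
next
  case (s8 X' X Z Xs)
  then show ?case
    using n_v_head_Suc[of X X' Xs] n_w_Cons[of Z X Xs] n_v_Cons[of Z e "X' # Xs"] n_w_Cons[of e X' Xs]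
    by (simp add: algebra_simps)
qed simp_all

lemma n_O_rel: "O_rel A R \<Longrightarrow> n R = 2 * n A + 1"
proof (induction rule: O_rel.induct)
  case (2 X Xs)
  then show ?case using n_v_Cons[of e X Xs] by simp
next
  case (3 X X' Xs)
  then show ?case using n_v_head_Suc[of X' X Xs] n_sigma by simp
qed simp

lemma n_I_rel: "I_rel A R \<Longrightarrow> n R = 2 * n A + 2"
proof (induction rule: I_rel.induct)
  case (2 X Xs)
  then show ?case using n_w_Cons[of e X Xs] by simp
next
  case (3 X X' Xs)
  then show ?case using n_w_head_Suc[of X' X Xs] n_sigma by simp
qed simp

lemma not_sigma_e: "\<not> \<sigma> X e"
  by (auto elim: \<sigma>.cases)

text \<open>
  Functionality and injectivity of \<sigma> must be proved together (rule s8 needs both), hence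
  the equivalence. The rotation makes the inversion act on the second \<sigma>-fact rather than on
  the hypothesis of the rule being inducted over.
\<close>

lemma sigma_eq_iff: "\<sigma> X Y \<Longrightarrow> \<sigma> X' Y' \<Longrightarrow> X = X' \<longleftrightarrow> Y = Y'"
  by (induction arbitrary: X' Y' rule: \<sigma>.induct; rotate_tac -1; erule \<sigma>.cases)
    (auto simp: not_sigma_e)

lemma sigma_functional: "\<sigma> X Y \<Longrightarrow> \<sigma> X Z \<Longrightarrow> Z = Y"
  using sigma_eq_iff by blast

lemma list_head_e_cases:
  obtains "Ys = []" | "Ys = [e]" | Y Ys' where "Ys = e # Y # Ys'" | Y Ys' where "Ys = Y # Ys'" "Y \<noteq> e"
  by (metis list.exhaust)

lemma sigma_left_total_surjective: "(\<exists>X'. \<sigma> X X') \<and> (X \<noteq> e \<longrightarrow> (\<exists>P. \<sigma> P X))"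
proof (induction X)
  case e
  then show ?case using s1 by blast
next
  case (v Z Ys)
  show ?case
    by (cases rule: list_head_e_cases[of Ys]; cases "Z = e")
      (use v.IH in \<open>force intro: \<sigma>.intros\<close>)+
next
  case (w Z Ys)
  show ?case
    by (cases rule: list_head_e_cases[of Ys]; cases "Z = e")
      (use w.IH in \<open>force intro: \<sigma>.intros\<close>)+
qed

lemma sigma_successor_exists: "\<exists>X'. \<sigma> X X'"
  using sigma_left_total_surjective by blast

lemma sigma_predecessor_exists: "X \<noteq> e \<Longrightarrow> \<exists>P. \<sigma> P X"
  using sigma_left_total_surjective by blast

lemma O_rel_exists: "\<exists>R. O_rel A R"
  by (cases A) (use sigma_successor_exists in \<open>auto intro: O_rel.intros\<close>)

lemma I_rel_exists: "\<exists>R. I_rel A R"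
  by (cases A) (use sigma_successor_exists in \<open>auto intro: I_rel.intros\<close>)

lemma O_rel_functional: "O_rel A R \<Longrightarrow> O_rel A R' \<Longrightarrow> R' = R"
  by (auto elim!: O_rel.cases dest: sigma_functional)

lemma I_rel_functional: "I_rel A R \<Longrightarrow> I_rel A R' \<Longrightarrow> R' = R"
  by (auto elim!: I_rel.cases dest: sigma_functional)

lemma O_rel_onto_v: "\<exists>A. O_rel A (v Z Ys)"
  by (cases "Z = e"; cases Ys) (use sigma_predecessor_exists in \<open>auto intro: O_rel.intros\<close>)

lemma I_rel_onto_w: "\<exists>A. I_rel A (w Z Ys)"
  by (cases "Z = e"; cases Ys) (use sigma_predecessor_exists in \<open>auto intro: I_rel.intros\<close>)

lemma t_exists: "\<exists>X. t x X"
proof (induction x rule: less_induct)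
  case (less x)
  consider "x = 0" | "x > 0" "odd x" | "x > 0" "even x"
    by blast
  then show ?case
  proof cases
    case 1
    then show ?thesis using t0 by blast
  next
    case 2
    then obtain A R where "t ((x - 1) div 2) A" "O_rel A R"
      using less[of "(x - 1) div 2"] O_rel_exists by fastforce
    then show ?thesis using t_odd 2 by blast
  next
    case 3
    then obtain A R where "t (x div 2 - 1) A" "I_rel A R"
      using less[of "x div 2 - 1"] I_rel_exists by fastforce
    then show ?thesis using t_even 3 by blast
  qed
qed

lemma t_functional: "t x X \<Longrightarrow> t x Y \<Longrightarrow> Y = X"
proof (induction arbitrary: Y rule: t.induct)
  case t0
  then show ?case by (cases rule: t.cases) auto
next
  case (t_odd x A R)
  from t_odd.prems obtain A' where "t ((x - 1) div 2) A'" "O_rel A' Y"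
    using t_odd.hyps by (cases rule: t.cases) auto
  then show ?case using t_odd.IH \<open>O_rel A R\<close> O_rel_functional by blast
next
  case (t_even x A R)
  from t_even.prems obtain A' where "t (x div 2 - 1) A'" "I_rel A' Y"
    using t_even.hyps by (cases rule: t.cases) auto
  then show ?case using t_even.IH \<open>I_rel A R\<close> I_rel_functional by blast
qed

lemma n_eq_of_t: "t x X \<Longrightarrow> n X = x"
proof (induction rule: t.induct)
  case (t_odd x A R)
  then show ?case using n_O_rel[OF t_odd(4)] by (simp add: odd_two_times_div_two_succ)
next
  case (t_even x A R)
  then show ?case using n_I_rel[OF t_even(4)] by (auto elim!: evenE)
qed simp

lemma t_n: "t (n X) X"
proof (induction X rule: measure_induct_rule[of n])
  case (less X)
  show ?case
  proof (cases X)
    case e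
    then show ?thesis using t0 by simp
  next
    case (v Z Ys)
    then obtain A where A: "O_rel A X" using O_rel_onto_v by blast
    then have "t (n A) A" using less n_O_rel by simp
    then show ?thesis using t_odd[of "n X" A X] A n_O_rel by simp
  next
    case (w Z Ys)
    then obtain A where A: "I_rel A X" using I_rel_onto_w by blast
    then have "t (n A) A" using less n_I_rel by simp
    then show ?thesis using t_even[of "n X" A X] A n_I_rel by simp
  qed
qed

theorem proposition4:
  shows "(\<forall>x. \<exists>!X. t x X) \<and>
         (\<forall>X. t (n X) X) \<and>
         (\<forall>x. n (THE X. t x X) = x)"
proof (intro conjI allI)
  show unique: "\<exists>!X. t x X" for x
    using t_exists t_functional by blast
  show "t (n X) X" for X
    by (rule t_n)
  show "n (THE X. t x X) = x" for x
    using theI'[OF unique] by (rule n_eq_of_t)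
qed

end
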